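(* Let $n>1$ and $m$ be integers with $0<m<n$. Then $$\left|\mathcal{F}(n,m)\right|=|\mathcal{F}_{n-m}^m|+|\mathcal{F}^{n-m}_m|-1,$$ and $$\left|\mathcal{F}(n,m)\right|-2=\sum_{d\geq1}\overline{\mu}(d)\cdot\left\lfloor\tfrac md\right\rfloor\cdot\left\lfloor\tfrac{n-m}{d}\right\rfloor .$$ In particular, for every positive integer $t$, $$\sum_{d\geq1}\overline{\mu}(d)\cdot\left\lfloor\tfrac td\right\rfloor^2=\left|\mathcal{F}(2t,t)\right|-2=2\left|\mathcal{F}_t\right|-3 .$$
   Context: For an integer $N\geq 1$, the Farey sequence $\mathcal{F}_N$ is the ascending sequence of irreducible fractions $\tfrac hk$ (with $h\ge0$, $k\ge1$, $\gcd(h,k)=1$) such that $\tfrac01\leq\tfrac hk\leq\tfrac11$ and $1\leq k\leq N$. For integers $N\ge1$ and $M$, $\mathcal{F}_N^M:=\left(\tfrac hk\in\mathcal{F}_N:\ h\leq M\right)$. For $0<m<n$, $\mathcal{F}(n,m):=\left(\tfrac hk\in\mathcal{F}_n:\ h\leq m,\ k-h\leq n-m\right)$ (the Farey subsequence associated with an element of rank $m$ in the Boolean lattice of rank $n$). $\overline{\mu}$ denotes the number-theoretic Möbius function, and $|\cdot|$ denotes the number of terms of a sequence. *)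

theory Defs
  imports "HOL-Computational_Algebra.Computational_Algebra"
begin

text \<open>Fractions h/k are represented by pairs (h,k) of naturals in lowest terms.\<close>

definition farey :: "nat \<Rightarrow> (nat \<times> nat) set" where
  "farey N = {(h, k). 1 \<le> k \<and> k \<le> N \<and> h \<le> k \<and> coprime h k}"

definition farey_upto :: "nat \<Rightarrow> int \<Rightarrow> (nat \<times> nat) set" where
  "farey_upto N M = {(h, k) \<in> farey N. int h \<le> M}"

definition farey_bool :: "nat \<Rightarrow> nat \<Rightarrow> (nat \<times> nat) set" where
  "farey_bool n m = {(h, k) \<in> farey n. h \<le> m \<and> k - h \<le> n - m}"

definition moebius :: "nat \<Rightarrow> int" where
  "moebius d = (if d = 0 then 0 else if squarefree d then (-1) ^ card (prime_factors d) else 0)"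

end

theory Submission imports Defs begin

text \<open>The shear \<open>(h, k) \<mapsto> (h, k - h)\<close> identifies \<open>F(n,m)\<close> with the coprime pairs \<open>(a, b)\<close>
  with \<open>a \<le> m\<close> and \<open>b \<le> n - m\<close>. A pair with \<open>a \<le> b\<close> is a fraction \<open>a/b\<close> of \<open>F_{n-m}^m\<close>, a pair
  with \<open>b \<le> a\<close> is a reversed fraction of \<open>F_m^{n-m}\<close>, and \<open>(1, 1)\<close> is the only pair of both
  kinds; this gives the first identity. Apart from \<open>(0, 1)\<close> and \<open>(1, 0)\<close> both entries are
  positive, and writing the indicator of \<open>gcd a b = 1\<close> as the sum of \<open>\<mu>(d)\<close> over the common
  divisors \<open>d\<close> counts these pairs as \<open>\<Sum>\<^sub>d \<mu>(d) \<lfloor>m/d\<rfloor> \<lfloor>(n-m)/d\<rfloor>\<close>. For \<open>n = 2t\<close>, \<open>m = t\<close>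
  both Farey subsequences are the whole of \<open>F_t\<close>.\<close>

lemma prime_factors_prod_primes:
  fixes S :: "nat set"
  assumes "finite S" "\<And>p. p \<in> S \<Longrightarrow> prime p"
  shows "prime_factors (\<Prod>S) = S"
proof -
  have "0 \<notin> id ` S" using assms(2) by force
  from prime_factors_prod[OF assms(1) this] show ?thesis
    using assms(2) by (auto simp: prime_factorization_prime)
qed

lemma squarefree_prod_primes:
  fixes S :: "nat set"
  assumes "\<And>p. p \<in> S \<Longrightarrow> prime p"
  shows "squarefree (\<Prod>S)"
  using squarefree_prod_coprime[of S id] assms by (simp add: primes_coprime squarefree_prime)

lemma moebius_prod_primes:
  fixes S :: "nat set"
  assumes "finite S" "\<And>p. p \<in> S \<Longrightarrow> prime p"
  shows "moebius (\<Prod>S) = (-1) ^ card S"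
proof -
  have "\<Prod>S \<noteq> 0" using assms by (metis prime_gt_0_nat prod_pos not_gr0)
  then show ?thesis
    using prime_factors_prod_primes[OF assms] squarefree_prod_primes[OF assms(2)]
    by (simp add: moebius_def)
qed

lemma prod_prime_factors_squarefree:
  fixes d :: nat
  assumes "d > 0" "squarefree d"
  shows "\<Prod>(prime_factors d) = d"
proof -
  have "(\<Prod>p \<in> prime_factors d. p) = (\<Prod>p \<in> prime_factors d. p ^ multiplicity p d)"
    using squarefree_factorial_semiring'[of d] assms by (intro prod.cong) auto
  also have "\<dots> = d"
    using prod_prime_factors[of d] assms by simp
  finally show ?thesis .
qed

lemma prod_prime_factors_dvd:
  fixes g :: nat
  assumes "g > 0"
  shows "\<Prod>(prime_factors g) dvd g"
proof -
  have "(\<Prod>p \<in> prime_factors g. p) dvd (\<Prod>p \<in> prime_factors g. p ^ multiplicity p g)"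
    by (intro prod_dvd_prod) (auto simp: prime_factors_multiplicity)
  then show ?thesis using prod_prime_factors[of g] assms by simp
qed

lemma bij_betw_prod_squarefree_divisors:
  fixes g :: nat
  assumes "g > 0"
  shows "bij_betw Prod (Pow (prime_factors g)) {d. d dvd g \<and> squarefree d}"
proof (rule bij_betwI[where g = prime_factors])
  have primes: "finite S \<and> (\<forall>p\<in>S. prime p)" if "S \<in> Pow (prime_factors g)" for S
    using that finite_subset by auto
  show "Prod \<in> Pow (prime_factors g) \<rightarrow> {d. d dvd g \<and> squarefree d}"
  proof
    fix S assume S: "S \<in> Pow (prime_factors g)"
    have "\<Prod>S dvd \<Prod>(prime_factors g)"
      using S by (intro prod_dvd_prod_subset) auto
    also have "\<dots> dvd g" using prod_prime_factors_dvd assms by simp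
    finally show "\<Prod>S \<in> {d. d dvd g \<and> squarefree d}"
      using squarefree_prod_primes primes[OF S] by simp
  qed
  show "prime_factors \<in> {d. d dvd g \<and> squarefree d} \<rightarrow> Pow (prime_factors g)"
    using assms by (auto simp: prime_factors_dvd intro: dvd_trans)
  show "prime_factors (\<Prod>S) = S" if "S \<in> Pow (prime_factors g)" for S
    using prime_factors_prod_primes primes[OF that] by simp
  show "\<Prod>(prime_factors d) = d" if "d \<in> {d. d dvd g \<and> squarefree d}" for d
    using prod_prime_factors_squarefree[of d] that assms by (auto intro: Nat.gr0I)
qed

lemma sum_moebius_divisors:
  fixes g :: nat
  assumes "g > 0"
  shows "(\<Sum>d | d dvd g. moebius d) = of_bool (g = 1)"
proof -
  define P where "P = prime_factors g"
  have "(\<Sum>d | d dvd g. moebius d) = (\<Sum>d \<in> {d. d dvd g \<and> squarefree d}. moebius d)"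
    using assms by (intro sum.mono_neutral_right) (auto simp: moebius_def)
  also have "\<dots> = (\<Sum>S \<in> Pow P. moebius (\<Prod>S))"
    unfolding P_def by (rule sum.reindex_bij_betw[OF bij_betw_prod_squarefree_divisors[OF assms], symmetric])
  also have "\<dots> = (\<Sum>S \<in> Pow P. (-1) ^ card S)"
    using P_def by (intro sum.cong refl moebius_prod_primes) (auto intro: finite_subset)
  also have "\<dots> = (\<Prod>p\<in>P. (1::int) - 1)"
    using prod_diff_conv_sum[of P "\<lambda>_. 1::int" "\<lambda>_. 1"] P_def by simp
  also have "\<dots> = of_bool (g = 1)"
    using prime_factorization_empty_iff[of g] assms P_def by (auto simp: card_gt_0_iff)
  finally show ?thesis .
qed

lemma of_bool_coprime_eq_sum_moebius:
  fixes a b N :: nat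
  assumes "1 \<le> a" "a \<le> N"
  shows "(of_bool (coprime a b) :: int)
           = (\<Sum>d\<in>{1..N}. moebius d * of_bool (d dvd a) * of_bool (d dvd b))"
proof -
  have "{1..N} \<inter> {d. d dvd a \<and> d dvd b} = {d. d dvd gcd a b}"
  proof -
    have "1 \<le> d \<and> d \<le> N" if "d dvd a" for d
      using assms that dvd_imp_le[of d a] by (cases "d = 0") auto
    then show ?thesis by auto
  qed
  then have "(\<Sum>d\<in>{1..N}. moebius d * of_bool (d dvd a) * of_bool (d dvd b))
      = (\<Sum>d | d dvd gcd a b. moebius d)"
    by (simp add: mult.assoc of_bool_conj[symmetric] del: of_bool_conj)
  also have "\<dots> = of_bool (coprime a b)"
    using sum_moebius_divisors[of "gcd a b"] assms by (simp add: coprime_iff_gcd_eq_1)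
  finally show ?thesis by simp
qed

lemma sum_of_bool_dvd_atLeastAtMost:
  "(\<Sum>a\<in>{1..m}. of_bool (d dvd a) :: int) = int (m div d)"
  by (induction m) (simp_all add: sum.cl_ivl_Suc div_Suc dvd_eq_mod_eq_0)

lemma sum_product_swap:
  fixes f :: "'d \<Rightarrow> 'r :: comm_semiring_0"
  shows "(\<Sum>(a, b)\<in>A \<times> B. \<Sum>d\<in>D. f d * g d a * h d b)
           = (\<Sum>d\<in>D. f d * (sum (g d) A * sum (h d) B))"
proof -
  have "(\<Sum>(a, b)\<in>A \<times> B. \<Sum>d\<in>D. f d * g d a * h d b)
      = (\<Sum>d\<in>D. \<Sum>(a, b)\<in>A \<times> B. f d * g d a * h d b)"
    unfolding split_def by (rule sum.swap)
  also have "\<dots> = (\<Sum>d\<in>D. f d * (sum (g d) A * sum (h d) B))"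
    by (simp only: sum_product) (simp add: sum_distrib_left sum.cartesian_product[symmetric] mult.assoc)
  finally show ?thesis .
qed

lemma card_positive_coprime_pairs:
  fixes m m' N :: nat
  assumes "m \<le> N"
  shows "int (card {(a, b). a \<in> {1..m} \<and> b \<in> {1..m'} \<and> coprime a b})
           = (\<Sum>d\<in>{1..N}. moebius d * int (m div d) * int (m' div d))"
proof -
  have "{(a, b). a \<in> {1..m} \<and> b \<in> {1..m'} \<and> coprime a b}
          = ({1..m} \<times> {1..m'}) \<inter> {x. coprime (fst x) (snd x)}"
    by auto
  then have "int (card {(a, b). a \<in> {1..m} \<and> b \<in> {1..m'} \<and> coprime a b})
      = (\<Sum>(a, b)\<in>{1..m} \<times> {1..m'}. of_bool (coprime a b))"
    by (simp add: case_prod_beta)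
  also have "\<dots> = (\<Sum>(a, b)\<in>{1..m} \<times> {1..m'}.
                     \<Sum>d\<in>{1..N}. moebius d * of_bool (d dvd a) * of_bool (d dvd b))"
  proof (intro sum.cong refl)
    fix x assume "x \<in> {1..m} \<times> {1..m'}"
    then obtain a b where "x = (a, b)" "1 \<le> a" "a \<le> N" using assms by auto
    then show "(case x of (a, b) \<Rightarrow> of_bool (coprime a b))
      = (case x of (a, b) \<Rightarrow> \<Sum>d\<in>{1..N}. moebius d * of_bool (d dvd a) * of_bool (d dvd b))"
      using of_bool_coprime_eq_sum_moebius[of a N b] by simp
  qed
  also have "\<dots> = (\<Sum>d\<in>{1..N}. moebius d *
                     ((\<Sum>a\<in>{1..m}. of_bool (d dvd a)) * (\<Sum>b\<in>{1..m'}. of_bool (d dvd b))))"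
    by (rule sum_product_swap)
  also have "\<dots> = (\<Sum>d\<in>{1..N}. moebius d * int (m div d) * int (m' div d))"
    by (simp only: sum_of_bool_dvd_atLeastAtMost mult.assoc)
  finally show ?thesis .
qed

definition coprime_pairs :: "nat \<Rightarrow> nat \<Rightarrow> (nat \<times> nat) set" where
  "coprime_pairs m m' = {(a, b). a \<le> m \<and> b \<le> m' \<and> coprime a b}"

lemma farey_bool_eq_image_coprime_pairs:
  assumes "m \<le> n"
  shows "farey_bool n m = (\<lambda>(a, b). (a, a + b)) ` coprime_pairs m (n - m)"
proof (rule set_eqI, rule iffI)
  fix x assume x: "x \<in> farey_bool n m"
  obtain h k where hk: "x = (h, k)" by force
  have "coprime h (k - h) \<longleftrightarrow> coprime h k" if "h \<le> k" for h k :: nat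
    using that gcd_add2[of h "k - h"] by (simp add: coprime_iff_gcd_eq_1)
  with x hk have "(h, k - h) \<in> coprime_pairs m (n - m)" "x = (\<lambda>(a, b). (a, a + b)) (h, k - h)"
    by (auto simp: farey_bool_def farey_def coprime_pairs_def)
  then show "x \<in> (\<lambda>(a, b). (a, a + b)) ` coprime_pairs m (n - m)" by blast
next
  fix x assume "x \<in> (\<lambda>(a, b). (a, a + b)) ` coprime_pairs m (n - m)"
  then obtain a b where ab: "(a, b) \<in> coprime_pairs m (n - m)" "x = (a, a + b)" by auto
  then have "a + b \<noteq> 0" "coprime a (a + b)"
    by (auto simp: coprime_pairs_def coprime_iff_gcd_eq_1)
  with ab assms show "x \<in> farey_bool n m"
    by (auto simp: farey_bool_def farey_def coprime_pairs_def)
qed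

lemma card_farey_bool:
  assumes "m \<le> n"
  shows "card (farey_bool n m) = card (coprime_pairs m (n - m))"
proof -
  have "inj_on (\<lambda>(a, b). (a, a + b)) (coprime_pairs m (n - m))"
    by (auto simp: inj_on_def)
  then show ?thesis
    by (simp add: farey_bool_eq_image_coprime_pairs[OF assms] card_image)
qed

lemma coprime_zero_imp_one:
  fixes a b :: nat
  shows "coprime a b \<Longrightarrow> (a = 0 \<longrightarrow> b = 1) \<and> (b = 0 \<longrightarrow> a = 1)"
  by auto

lemma card_coprime_pairs_positive:
  assumes "1 \<le> m" "1 \<le> m'"
  shows "card (coprime_pairs m m')
           = card {(a, b). a \<in> {1..m} \<and> b \<in> {1..m'} \<and> coprime a b} + 2"
proof -
  let ?Q = "{(a, b). a \<in> {1..m} \<and> b \<in> {1..m'} \<and> coprime a b}"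
  have "coprime_pairs m m' = insert (0, 1) (insert (1, 0) ?Q)"
    using assms by (auto simp: coprime_pairs_def dest: coprime_zero_imp_one)
  moreover have "finite ?Q"
    by (rule finite_subset[of _ "{1..m} \<times> {1..m'}"]) auto
  ultimately show ?thesis by simp
qed

lemma coprime_pairs_eq_farey_upto_Un:
  "coprime_pairs m m' = farey_upto m' (int m) \<union> prod.swap ` farey_upto m (int m')"
proof (rule set_eqI)
  fix x :: "nat \<times> nat"
  obtain a b where x: "x = (a, b)" by force
  show "x \<in> coprime_pairs m m' \<longleftrightarrow> x \<in> farey_upto m' (int m) \<union> prod.swap ` farey_upto m (int m')"
    unfolding x using coprime_zero_imp_one[of a b]
    by (auto simp: farey_upto_def farey_def coprime_pairs_def coprime_commute)
qed

lemma farey_upto_Int_swap: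
  assumes "1 \<le> m" "1 \<le> m'"
  shows "farey_upto m' (int m) \<inter> prod.swap ` farey_upto m (int m') = {(1, 1)}"
  using assms by (auto simp: farey_upto_def farey_def)

lemma finite_farey_upto: "finite (farey_upto N M)"
  by (rule finite_subset[of _ "{..N} \<times> {..N}"]) (auto simp: farey_upto_def farey_def)

lemma card_coprime_pairs_farey_upto:
  assumes "1 \<le> m" "1 \<le> m'"
  shows "card (coprime_pairs m m') + 1
           = card (farey_upto m' (int m)) + card (farey_upto m (int m'))"
proof -
  have "card (prod.swap ` farey_upto m (int m')) = card (farey_upto m (int m'))"
    by (rule card_image) (auto simp: inj_on_def)
  moreover have "card (farey_upto m' (int m)) + card (prod.swap ` farey_upto m (int m'))
      = card (coprime_pairs m m') + card {(1::nat, 1::nat)}"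
    unfolding coprime_pairs_eq_farey_upto_Un farey_upto_Int_swap[OF assms, symmetric]
    by (rule card_Un_Int[OF finite_farey_upto finite_imageI[OF finite_farey_upto]])
  ultimately show ?thesis by simp
qed

lemma card_farey_bool_formulas:
  fixes n m :: nat
  assumes "0 < m" "m < n"
  shows "int (card (farey_bool n m))
           = int (card (farey_upto (n - m) (int m))) + int (card (farey_upto m (int (n - m)))) - 1"
    and "int (card (farey_bool n m)) - 2
           = (\<Sum>d\<in>{1..n}. moebius d * int (m div d) * int ((n - m) div d))"
proof -
  have bool: "card (farey_bool n m) = card (coprime_pairs m (n - m))"
    using card_farey_bool assms by simp
  have "card (coprime_pairs m (n - m)) + 1
          = card (farey_upto (n - m) (int m)) + card (farey_upto m (int (n - m)))"
    using card_coprime_pairs_farey_upto[of m "n - m"] assms by simp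
  with bool show "int (card (farey_bool n m))
          = int (card (farey_upto (n - m) (int m))) + int (card (farey_upto m (int (n - m)))) - 1"
    by linarith
  show "int (card (farey_bool n m)) - 2
          = (\<Sum>d\<in>{1..n}. moebius d * int (m div d) * int ((n - m) div d))"
    using bool card_coprime_pairs_positive[of m "n - m"]
      card_positive_coprime_pairs[of m n "n - m"] assms by simp
qed

theorem mainTheorem4:
  "(\<forall>n m :: nat. n > 1 \<and> 0 < m \<and> m < n \<longrightarrow>
      int (card (farey_bool n m))
        = int (card (farey_upto (n - m) (int m))) + int (card (farey_upto m (int (n - m)))) - 1
    \<and> int (card (farey_bool n m)) - 2
        = (\<Sum>d\<in>{1..n}. moebius d * int (m div d) * int ((n - m) div d)))
   \<and> (\<forall>t :: nat. t > 0 \<longrightarrow>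
      (\<Sum>d\<in>{1..t}. moebius d * int (t div d) ^ 2) = int (card (farey_bool (2 * t) t)) - 2
    \<and> int (card (farey_bool (2 * t) t)) - 2 = 2 * int (card (farey t)) - 3)"
proof (intro conjI allI impI)
  fix n m :: nat
  assume "1 < n \<and> 0 < m \<and> m < n"
  then show "int (card (farey_bool n m))
        = int (card (farey_upto (n - m) (int m))) + int (card (farey_upto m (int (n - m)))) - 1"
    "int (card (farey_bool n m)) - 2
        = (\<Sum>d\<in>{1..n}. moebius d * int (m div d) * int ((n - m) div d))"
    using card_farey_bool_formulas[of m n] by auto
next
  fix t :: nat assume t: "t > 0"
  have "(\<Sum>d\<in>{1..2 * t}. moebius d * int (t div d) * int (t div d))
      = (\<Sum>d\<in>{1..t}. moebius d * int (t div d) ^ 2)"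
    by (subst sum.mono_neutral_right) (auto simp: power2_eq_square mult.assoc)
  then show "(\<Sum>d\<in>{1..t}. moebius d * int (t div d) ^ 2) = int (card (farey_bool (2 * t) t)) - 2"
    using card_farey_bool_formulas(2)[of t "2 * t"] t by simp
  have "farey_upto t (int t) = farey t"
    by (auto simp: farey_upto_def farey_def)
  then show "int (card (farey_bool (2 * t) t)) - 2 = 2 * int (card (farey t)) - 3"
    using card_farey_bool_formulas(1)[of t "2 * t"] t by simp
qed

end
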